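(* Let $\mathcal{M}=(E,\rho)$ be a $q$-matroid with exactly one cyclic flat, $\mathcal{Z}(\mathcal{M})=\{\hat Z\}$ (so $\hat Z=\mathrm{cl}(0)=\mathrm{cyc}(E)$ and $\rho(\hat Z)=0$). Then for every subspace $V\le E$: $V$ is a flat if and only if $\hat Z\le V$, and $V$ is open (cyclic) if and only if $V\le\hat Z$. In particular, $\mathrm{cl}(0)=E$ if and only if $\mathcal{M}=\mathcal{U}_0(E)$, and $\mathrm{cyc}(E)=0$ if and only if $\mathcal{M}=\mathcal{U}_{\dim E}(E)$.
   Context: Let $\mathbb{F}=\mathbb{F}_q$. A $q$-matroid is $\mathcal{M}=(E,\rho)$, $E$ a finite-dimensional $\mathbb{F}$-vector space, $\rho$ from subspaces to $\mathbb{Z}_{\ge0}$ with $0\le\rho(V)\le\dim V$, monotone and submodular. Flat: $\rho(F+\langle x\rangle)>\rho(F)$ for all $x\notin F$. Closure: $\mathrm{cl}(V)=\sum\{\langle x\rangle:\rho(V+\langle x\rangle)=\rho(V)\}$. Cyclic core: $\mathrm{cyc}(V)=\{x\in V\mid\rho(W)=\rho(V)\text{ for all }W\le V\text{ with }W+\langle x\rangle=V\}$; $V$ is cyclic (equivalently open, i.e. a sum of circuits) if $\mathrm{cyc}(V)=V$. $\mathcal{Z}(\mathcal{M})$: set of cyclic flats. $\mathcal{U}_k(E)$ is the $q$-matroid with $\rho(V)=\min\{k,\dim V\}$. *)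

theory Defs
  imports "HOL-Analysis.Analysis"
begin

text \<open>Ambient space: vectors 'a^'n over a finite field 'a (= F_q).
  The q-matroid ground space E is an arbitrary subspace of 'a^'n
  (every finite-dimensional F_q-space, including 0, arises this way).\<close>

type_synonym ('a, 'n) vecsp = "'a ^ 'n"

definition subspaces_of :: "('a::{field,finite} ^ 'n) set \<Rightarrow> ('a ^ 'n) set set" where
  "subspaces_of E = {V. vec.subspace V \<and> V \<subseteq> E}"

definition ssum :: "('a::{field,finite} ^ 'n) set \<Rightarrow> ('a ^ 'n) set \<Rightarrow> ('a ^ 'n) set" where
  "ssum V W = vec.span (V \<union> W)"

definition qmatroid :: "('a::{field,finite} ^ 'n) set \<Rightarrow> (('a ^ 'n) set \<Rightarrow> nat) \<Rightarrow> bool" where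
  "qmatroid E \<rho> \<longleftrightarrow> vec.subspace E \<and>
     (\<forall>V \<in> subspaces_of E. \<rho> V \<le> vec.dim V) \<and>
     (\<forall>V \<in> subspaces_of E. \<forall>W \<in> subspaces_of E. V \<subseteq> W \<longrightarrow> \<rho> V \<le> \<rho> W) \<and>
     (\<forall>V \<in> subspaces_of E. \<forall>W \<in> subspaces_of E.
        \<rho> (ssum V W) + \<rho> (V \<inter> W) \<le> \<rho> V + \<rho> W)"

definition is_flat :: "('a::{field,finite} ^ 'n) set \<Rightarrow> (('a ^ 'n) set \<Rightarrow> nat) \<Rightarrow> ('a ^ 'n) set \<Rightarrow> bool" where
  "is_flat E \<rho> F \<longleftrightarrow> F \<in> subspaces_of E \<and>
     (\<forall>x \<in> E. x \<notin> F \<longrightarrow> \<rho> (ssum F (vec.span {x})) > \<rho> F)"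

definition qcl :: "('a::{field,finite} ^ 'n) set \<Rightarrow> (('a ^ 'n) set \<Rightarrow> nat) \<Rightarrow> ('a ^ 'n) set \<Rightarrow> ('a ^ 'n) set" where
  "qcl E \<rho> V = vec.span (\<Union>{vec.span {x} | x. x \<in> E \<and> \<rho> (ssum V (vec.span {x})) = \<rho> V})"

definition qcyc :: "('a::{field,finite} ^ 'n) set \<Rightarrow> (('a ^ 'n) set \<Rightarrow> nat) \<Rightarrow> ('a ^ 'n) set \<Rightarrow> ('a ^ 'n) set" where
  "qcyc E \<rho> V = {x \<in> V. \<forall>W. vec.subspace W \<and> W \<subseteq> V \<and> ssum W (vec.span {x}) = V \<longrightarrow> \<rho> W = \<rho> V}"

definition is_cyclic :: "('a::{field,finite} ^ 'n) set \<Rightarrow> (('a ^ 'n) set \<Rightarrow> nat) \<Rightarrow> ('a ^ 'n) set \<Rightarrow> bool" where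
  "is_cyclic E \<rho> V \<longleftrightarrow> V \<in> subspaces_of E \<and> qcyc E \<rho> V = V"

definition cyclic_flats :: "('a::{field,finite} ^ 'n) set \<Rightarrow> (('a ^ 'n) set \<Rightarrow> nat) \<Rightarrow> ('a ^ 'n) set set" where
  "cyclic_flats E \<rho> = {V. is_flat E \<rho> V \<and> is_cyclic E \<rho> V}"

definition is_uniform :: "nat \<Rightarrow> ('a::{field,finite} ^ 'n) set \<Rightarrow> (('a ^ 'n) set \<Rightarrow> nat) \<Rightarrow> bool" where
  "is_uniform k E \<rho> \<longleftrightarrow> (\<forall>V \<in> subspaces_of E. \<rho> V = min k (vec.dim V))"

end

theory Submission
  imports Defs
begin

text \<open>The span of the loops is always a cyclic flat, so it is the unique cyclic flat \<open>Z\<close>; hence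
  \<open>\<rho> Z = 0\<close> and every flat contains \<open>Z\<close>. The heart of the matter is the rank formula
  \<open>\<rho> V = dim (V + Z) - dim Z\<close>. If it failed, take a superspace \<open>U\<close> of \<open>Z\<close> of minimal dimension
  with \<open>\<rho> U + dim Z < dim U\<close>. For every hyperplane \<open>W\<close> of \<open>U\<close>, \<open>\<rho> W = \<rho> (W + Z) \<ge> \<rho> U\<close> by
  minimality, so \<open>U\<close> is cyclic; a maximal superspace of \<open>U\<close> of the same rank is a flat and is
  still cyclic, i.e. a cyclic flat containing \<open>U \<noteq> Z\<close>. Given the rank formula, the flats are
  exactly the superspaces of \<open>Z\<close>, and the cyclic core of \<open>V\<close> is \<open>V \<inter> Z\<close>: a vector outside \<open>Z\<close>
  can be avoided by a hyperplane \<open>W\<close> with \<open>W + Z\<close> still a proper subspace of \<open>V + Z\<close>.\<close>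

lemmas span_subspace_eq [simp] = vec.span_eq_iff[THEN iffD2]

lemma mem_subspaces_of: "V \<in> subspaces_of E \<longleftrightarrow> vec.subspace V \<and> V \<subseteq> E"
  by (simp add: subspaces_of_def)

lemma subspace_ssum: "vec.subspace (ssum V W)"
  unfolding ssum_def by (rule vec.subspace_span)

lemma subset_ssum_left: "V \<subseteq> ssum V W" and subset_ssum_right: "W \<subseteq> ssum V W"
  unfolding ssum_def using vec.span_superset[of "V \<union> W"] by auto

lemma ssum_subset: "vec.subspace U \<Longrightarrow> V \<subseteq> U \<Longrightarrow> W \<subseteq> U \<Longrightarrow> ssum V W \<subseteq> U"
  unfolding ssum_def by (simp add: vec.span_minimal)

lemma ssum_mono: "V \<subseteq> V' \<Longrightarrow> W \<subseteq> W' \<Longrightarrow> ssum V W \<subseteq> ssum V' W'"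
  unfolding ssum_def by (intro vec.span_mono) auto

lemma ssum_absorb: "vec.subspace V \<Longrightarrow> W \<subseteq> V \<Longrightarrow> ssum V W = V"
  by (intro antisym ssum_subset subset_ssum_left) auto

lemma ssum_span_span: "ssum (vec.span A) (vec.span B) = vec.span (A \<union> B)"
  unfolding ssum_def
  by (intro antisym vec.span_minimal vec.span_mono)
     (auto intro: vec.span_mono[THEN subsetD] vec.span_base)

lemma ssum_span_singleton: "vec.subspace V \<Longrightarrow> ssum V (vec.span {x}) = vec.span (insert x V)"
  using ssum_span_span[of V "{x}"] by (simp add:)

lemma ssum_subspaces_of:
  "vec.subspace E \<Longrightarrow> V \<in> subspaces_of E \<Longrightarrow> W \<in> subspaces_of E \<Longrightarrow> ssum V W \<in> subspaces_of E"
  by (simp add: mem_subspaces_of subspace_ssum ssum_subset)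

lemma span_singleton_subspaces_of: "vec.subspace E \<Longrightarrow> x \<in> E \<Longrightarrow> vec.span {x} \<in> subspaces_of E"
  by (simp add: mem_subspaces_of vec.span_minimal)

lemma dim_span_insert_notin:
  "vec.subspace V \<Longrightarrow> x \<notin> V \<Longrightarrow> vec.dim (vec.span (insert x V)) = vec.dim V + 1"
  by (simp add: vec.dim_insert)

lemma dim_span_singleton_le: "vec.dim (vec.span {x}) \<le> 1"
  by (simp add: vec.dim_insert)

lemma span_insert_exchange:
  assumes "y \<in> vec.span (insert x S)" "y \<notin> vec.span S"
  shows "vec.span (insert y S) = vec.span (insert x S)"
proof -
  have "x \<in> vec.span (insert y S)" using assms by (rule vec.in_span_insert)
  then have "vec.span (insert y S) = vec.span (insert x (insert y S))" by (simp add: vec.span_redundant)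
  also have "\<dots> = vec.span (insert x S)"
    using vec.span_redundant[OF assms(1)] by (simp add: insert_commute)
  finally show ?thesis .
qed

lemma Int_ssum_modular:
  assumes V: "vec.subspace V" and Z: "vec.subspace Z" and AV: "A \<subseteq> V"
  shows "V \<inter> ssum A Z = ssum A (V \<inter> Z)"
proof
  show "ssum A (V \<inter> Z) \<subseteq> V \<inter> ssum A Z"
    using assms by (simp add: ssum_subset ssum_mono)
  show "V \<inter> ssum A Z \<subseteq> ssum A (V \<inter> Z)"
  proof
  fix v assume "v \<in> V \<inter> ssum A Z"
  then obtain a z where v: "v = a + z" "v \<in> V" and a: "a \<in> vec.span A" and z: "z \<in> Z"
    unfolding ssum_def vec.span_Un using Z by auto
  have "a \<in> V" using a AV V by (meson vec.span_minimal subsetD)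
  then have "z \<in> V \<inter> Z" using v z V by (metis IntI add_diff_cancel_left' vec.subspace_diff)
  then show "v \<in> ssum A (V \<inter> Z)"
    unfolding ssum_def vec.span_Un using v a vec.span_base by blast
  qed
qed

lemma exists_hyperplane_avoiding:
  assumes V: "vec.subspace V" and Z: "vec.subspace Z" and x: "x \<in> V" "x \<notin> Z"
  obtains W where "vec.subspace W" "W \<subseteq> V" "vec.span (insert x W) = V" "x \<notin> ssum W Z"
proof -
  define \<W> where "\<W> = {W. vec.subspace W \<and> V \<inter> Z \<subseteq> W \<and> W \<subseteq> V \<and> x \<notin> ssum W Z}"
  have "V \<inter> Z \<in> \<W>"
    using V Z x by (simp add: \<W>_def ssum_def Un_absorb1 span_subspace_eq vec.subspace_inter)
  then obtain W where W: "W \<in> \<W>" and maximal: "\<And>W'. W' \<in> \<W> \<Longrightarrow> W \<subseteq> W' \<Longrightarrow> W = W'"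
    using finite_has_maximal[of \<W>] by (metis finite empty_iff)
  have sW: "vec.subspace W" and VZ_W: "V \<inter> Z \<subseteq> W" and WV: "W \<subseteq> V" and xW: "x \<notin> ssum W Z"
    using W by (auto simp: \<W>_def)
  have "V \<subseteq> vec.span (insert x W)"
  proof
    fix y assume yV: "y \<in> V"
    show "y \<in> vec.span (insert x W)"
    proof (cases "y \<in> W")
      case False
      let ?W' = "vec.span (insert y W)"
      have "W \<noteq> ?W'" using False vec.span_base[of y "insert y W"] by auto
      moreover have "W \<subseteq> ?W'" "?W' \<subseteq> V" "V \<inter> Z \<subseteq> ?W'"
        using vec.span_superset[of "insert y W"] vec.span_minimal[of "insert y W" V] VZ_W yV WV V
        by auto
      ultimately have "x \<in> ssum ?W' Z" using maximal[of ?W'] by (auto simp: \<W>_def)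
      then have "x \<in> vec.span (insert y (W \<union> Z))"
        using ssum_span_span[of "insert y W" Z] Z by (simp add:)
      moreover have "x \<notin> vec.span (W \<union> Z)"
        using xW ssum_span_span[of W Z] sW Z by (simp add:)
      ultimately have "y \<in> vec.span (insert x (W \<union> Z))" by (rule vec.in_span_insert)
      then have "y \<in> V \<inter> ssum (vec.span (insert x W)) Z"
        using ssum_span_span[of "insert x W" Z] Z yV by (simp add:)
      also have "\<dots> = ssum (vec.span (insert x W)) (V \<inter> Z)"
        using x WV V by (intro Int_ssum_modular Z V vec.span_minimal) auto
      also have "\<dots> \<subseteq> vec.span (insert x W)"
        using VZ_W by (intro ssum_subset) (auto intro: vec.span_superset[THEN subsetD])
      finally show ?thesis .
    qed (simp add: vec.span_base)
  qed
  moreover have "vec.span (insert x W) \<subseteq> V"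
    using x WV V by (intro vec.span_minimal) auto
  ultimately show thesis using that sW WV xW by blast
qed

locale q_matroid =
  fixes E :: "('a::{field,finite} ^ 'n) set" and \<rho> :: "('a ^ 'n) set \<Rightarrow> nat"
  assumes qmatroid: "qmatroid E \<rho>"
begin

lemma subspace_E: "vec.subspace E"
  using qmatroid by (simp add: qmatroid_def)

lemma E_subspaces_of: "E \<in> subspaces_of E"
  by (simp add: mem_subspaces_of subspace_E)

lemma rank_le_dim: "V \<in> subspaces_of E \<Longrightarrow> \<rho> V \<le> vec.dim V"
  using qmatroid by (simp add: qmatroid_def)

lemma rank_mono: "V \<in> subspaces_of E \<Longrightarrow> W \<in> subspaces_of E \<Longrightarrow> V \<subseteq> W \<Longrightarrow> \<rho> V \<le> \<rho> W"
  using qmatroid by (simp add: qmatroid_def)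

lemma rank_submodular:
  "V \<in> subspaces_of E \<Longrightarrow> W \<in> subspaces_of E \<Longrightarrow> \<rho> (ssum V W) + \<rho> (V \<inter> W) \<le> \<rho> V + \<rho> W"
  using qmatroid by (simp add: qmatroid_def)

lemma rank_zero: "\<rho> {0} = 0"
  using rank_le_dim[of "{0}"] subspace_E by (simp add: mem_subspaces_of vec.subspace_0)

lemma rank_ssum_le: "V \<in> subspaces_of E \<Longrightarrow> W \<in> subspaces_of E \<Longrightarrow> \<rho> (ssum V W) \<le> \<rho> V + \<rho> W"
  using rank_submodular by fastforce

lemma rank_ssum_null:
  assumes "V \<in> subspaces_of E" "L \<in> subspaces_of E" "\<rho> L = 0"
  shows "\<rho> (ssum V L) = \<rho> V"
  using rank_ssum_le[of V L] rank_mono[of V "ssum V L"] assms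
  by (simp add: ssum_subspaces_of subspace_E subset_ssum_left)

lemma rank_le_rank_add_dim:
  assumes "V \<in> subspaces_of E" "U \<in> subspaces_of E" "V \<subseteq> U"
  shows "\<rho> U \<le> \<rho> V + (vec.dim U - vec.dim V)"
  using assms
proof (induction "vec.dim U - vec.dim V" arbitrary: V rule: less_induct)
  case less
  show ?case
  proof (cases "U = V")
    case False
    then obtain x where x: "x \<in> U" "x \<notin> V" using less.prems(3) by blast
    have sV: "vec.subspace V" and sU: "vec.subspace U" and xE: "x \<in> E"
      using less.prems x by (auto simp: mem_subspaces_of)
    let ?V' = "vec.span (insert x V)"
    have V'_eq: "?V' = ssum V (vec.span {x})" by (simp add: ssum_span_singleton sV)
    have V': "?V' \<in> subspaces_of E"
      unfolding V'_eq using less.prems(1) xE subspace_E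
      by (simp add: ssum_subspaces_of span_singleton_subspaces_of)
    have V'U: "?V' \<subseteq> U" using x less.prems(3) sU by (simp add: vec.span_minimal)
    have dim_V': "vec.dim ?V' = vec.dim V + 1" by (rule dim_span_insert_notin[OF sV x(2)])
    moreover have "vec.dim ?V' \<le> vec.dim U" by (rule vec.dim_subset[OF V'U])
    moreover have "\<rho> U \<le> \<rho> ?V' + (vec.dim U - vec.dim ?V')"
      using dim_V' \<open>vec.dim ?V' \<le> vec.dim U\<close> V' less.prems(2) V'U by (intro less.hyps) auto
    moreover have "\<rho> ?V' \<le> \<rho> V + 1"
      using rank_ssum_le[OF less.prems(1) span_singleton_subspaces_of[OF subspace_E xE]]
        rank_le_dim[OF span_singleton_subspaces_of[OF subspace_E xE]] dim_span_singleton_le[of x]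
      unfolding V'_eq by linarith
    ultimately show ?thesis by linarith
  qed simp
qed

lemma is_cyclicI:
  assumes "V \<in> subspaces_of E"
    and "\<And>x W. x \<in> V \<Longrightarrow> vec.subspace W \<Longrightarrow> W \<subseteq> V \<Longrightarrow> vec.span (insert x W) = V
           \<Longrightarrow> \<rho> V \<le> \<rho> W"
  shows "is_cyclic E \<rho> V"
  unfolding is_cyclic_def qcyc_def
proof (intro conjI assms(1) set_eqI iffI)
  fix x assume "x \<in> V"
  moreover have "\<rho> W = \<rho> V" if "vec.subspace W" "W \<subseteq> V" "ssum W (vec.span {x}) = V" for W
    using assms rank_mono[of W V] that \<open>x \<in> V\<close>
    by (fastforce simp: ssum_span_singleton mem_subspaces_of intro: antisym)
  ultimately show
    "x \<in> {x \<in> V. \<forall>W. vec.subspace W \<and> W \<subseteq> V \<and> ssum W (vec.span {x}) = V \<longrightarrow> \<rho> W = \<rho> V}"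
    by blast
qed simp

lemma is_cyclicD:
  assumes "is_cyclic E \<rho> V" "x \<in> V" "vec.subspace W" "W \<subseteq> V" "vec.span (insert x W) = V"
  shows "\<rho> W = \<rho> V"
proof -
  have "x \<in> qcyc E \<rho> V" using assms(1,2) by (simp add: is_cyclic_def)
  then show ?thesis using assms(3-5) by (simp add: qcyc_def ssum_span_singleton)
qed

lemma cyclic_rank_preserving_extension:
  assumes U: "is_cyclic E \<rho> U" and U': "U' \<in> subspaces_of E" "U \<subseteq> U'" and rank: "\<rho> U' = \<rho> U"
  shows "is_cyclic E \<rho> U'"
proof (rule is_cyclicI[OF U'(1)])
  fix x W assume x: "x \<in> U'" and sW: "vec.subspace W" and WU': "W \<subseteq> U'"
    and U'_eq: "vec.span (insert x W) = U'"
  have U_sub: "U \<in> subspaces_of E" using U by (simp add: is_cyclic_def)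
  have W: "W \<in> subspaces_of E" using sW WU' U' by (auto simp: mem_subspaces_of)
  show "\<rho> U' \<le> \<rho> W"
  proof (cases "U \<subseteq> W")
    case True
    then show ?thesis using rank rank_mono[OF U_sub W] by simp
  next
    case False
    then obtain y where y: "y \<in> U" "y \<notin> W" by blast
    have sU: "vec.subspace U" and sU': "vec.subspace U'" using U_sub U' by (auto simp: mem_subspaces_of)
    \<comment> \<open>exchanging \<open>x\<close> for \<open>y\<close> shows that \<open>U \<inter> W\<close> is a hyperplane of \<open>U\<close>\<close>
    have "vec.span (insert y W) = U'"
      using span_insert_exchange[of y x W] y U'(2) U'_eq sW by auto
    then have "U = ssum {y} (U \<inter> W)"
      using Int_ssum_modular[OF sU sW, of "{y}"] y U'(2) by (simp add: ssum_def Int_absorb2)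
    then have "\<rho> (U \<inter> W) = \<rho> U"
      using y sU sW by (intro is_cyclicD[OF U]) (auto simp: ssum_def vec.subspace_inter)
    then show ?thesis
      using rank rank_mono[of "U \<inter> W" W] W U_sub by (auto simp: subspaces_of_def vec.subspace_inter)
  qed
qed

lemma exists_flat_superset_same_rank:
  assumes U: "U \<in> subspaces_of E"
  obtains F where "is_flat E \<rho> F" "U \<subseteq> F" "\<rho> F = \<rho> U"
proof -
  define \<F> where "\<F> = {F \<in> subspaces_of E. U \<subseteq> F \<and> \<rho> F = \<rho> U}"
  have "U \<in> \<F>" using U by (simp add: \<F>_def)
  then obtain F where F: "F \<in> \<F>" and maximal: "\<And>F'. F' \<in> \<F> \<Longrightarrow> F \<subseteq> F' \<Longrightarrow> F = F'"
    using finite_has_maximal2[of \<F> U] by (metis finite)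
  have FE: "F \<in> subspaces_of E" and UF: "U \<subseteq> F" and rank_F: "\<rho> F = \<rho> U"
    using F by (auto simp: \<F>_def)
  have "\<rho> F < \<rho> (ssum F (vec.span {x}))" if x: "x \<in> E" "x \<notin> F" for x
  proof -
    let ?F' = "ssum F (vec.span {x})"
    have F': "?F' \<in> subspaces_of E"
      using FE x subspace_E by (simp add: ssum_subspaces_of span_singleton_subspaces_of)
    have "F \<noteq> ?F'" using x subset_ssum_right[of "vec.span {x}" F] vec.span_base[of x "{x}"] by auto
    then have "\<rho> ?F' \<noteq> \<rho> F"
      using maximal[of ?F'] F' UF rank_F subset_ssum_left[of F] by (auto simp: \<F>_def)
    then show ?thesis using rank_mono[OF FE F' subset_ssum_left] by simp
  qed
  then have "is_flat E \<rho> F" using FE by (simp add: is_flat_def)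
  then show thesis using that UF rank_F by blast
qed

lemma cyclic_subset_cyclic_flat:
  assumes "is_cyclic E \<rho> U"
  obtains F where "F \<in> cyclic_flats E \<rho>" "U \<subseteq> F" "\<rho> F = \<rho> U"
proof -
  have U: "U \<in> subspaces_of E" using assms by (simp add: is_cyclic_def)
  obtain F where "is_flat E \<rho> F" "U \<subseteq> F" "\<rho> F = \<rho> U"
    using exists_flat_superset_same_rank[OF U] .
  moreover have "is_cyclic E \<rho> F"
    using calculation assms by (auto simp: is_flat_def intro: cyclic_rank_preserving_extension)
  ultimately show thesis using that by (simp add: cyclic_flats_def)
qed

definition loops :: "('a ^ 'n) set" where
  "loops = {x \<in> E. \<rho> (vec.span {x}) = 0}"

lemma span_loops_subspaces_of: "vec.span loops \<in> subspaces_of E"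
  using subspace_E vec.span_minimal[of loops E] by (auto simp: mem_subspaces_of loops_def)

lemma rank_span_loops: "\<rho> (vec.span loops) = 0"
proof -
  have "\<rho> (vec.span S) = 0" if "S \<subseteq> loops" for S
  proof -
    have "finite S" by simp
    then show ?thesis using that
    proof (induction S rule: finite_induct)
      case empty
      then show ?case by (simp add: rank_zero)
    next
      case (insert x S)
      have x: "x \<in> E" "\<rho> (vec.span {x}) = 0" using insert.prems by (auto simp: loops_def)
      have "vec.span S \<in> subspaces_of E"
        using insert.prems span_loops_subspaces_of vec.span_mono[of S loops] by (simp add: mem_subspaces_of)
      then have "\<rho> (ssum (vec.span S) (vec.span {x})) = \<rho> (vec.span S)"
        using rank_ssum_null[OF _ span_singleton_subspaces_of[OF subspace_E x(1)] x(2)] by blast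
      then show ?case using insert.IH insert.prems ssum_span_span[of S "{x}"] by simp
    qed
  qed
  then show ?thesis by simp
qed

lemma rank_zero_imp_cyclic: "V \<in> subspaces_of E \<Longrightarrow> \<rho> V = 0 \<Longrightarrow> is_cyclic E \<rho> V"
  by (rule is_cyclicI) simp_all

lemma span_loops_cyclic_flat: "vec.span loops \<in> cyclic_flats E \<rho>"
proof -
  have "\<rho> (vec.span loops) < \<rho> (ssum (vec.span loops) (vec.span {x}))"
    if x: "x \<in> E" "x \<notin> vec.span loops" for x
  proof -
    have "x \<notin> loops" using x(2) vec.span_base by blast
    then have "0 < \<rho> (vec.span {x})" using x(1) by (simp add: loops_def)
    also have "\<dots> \<le> \<rho> (ssum (vec.span loops) (vec.span {x}))"
      using x(1) subspace_E span_loops_subspaces_of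
      by (intro rank_mono subset_ssum_right ssum_subspaces_of span_singleton_subspaces_of)
    finally show ?thesis by (simp add: rank_span_loops)
  qed
  then show ?thesis
    using span_loops_subspaces_of rank_span_loops rank_zero_imp_cyclic
    by (simp add: cyclic_flats_def is_flat_def)
qed

lemma span_loops_subset_flat:
  assumes F: "is_flat E \<rho> F"
  shows "vec.span loops \<subseteq> F"
proof -
  have FE: "F \<in> subspaces_of E" using F by (simp add: is_flat_def)
  have "x \<in> F" if x: "x \<in> loops" for x
  proof (rule ccontr)
    assume "x \<notin> F"
    moreover have "x \<in> E" "\<rho> (vec.span {x}) = 0" using x by (auto simp: loops_def)
    ultimately show False
      using F rank_ssum_null[OF FE span_singleton_subspaces_of[OF subspace_E]] by (auto simp: is_flat_def)
  qed
  then show ?thesis using FE vec.span_minimal[of loops F] by (auto simp: mem_subspaces_of)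
qed

lemma qcl_zero: "qcl E \<rho> {0} = vec.span loops"
proof -
  have ssum_zero: "ssum {0} (vec.span {x}) = vec.span {x}" for x
    by (simp add: ssum_def)
  have "qcl E \<rho> {0} = vec.span (\<Union>{vec.span {x} | x. x \<in> loops})"
    by (simp add: qcl_def ssum_zero rank_zero loops_def)
  also have "\<dots> = vec.span loops"
  proof (rule antisym)
    show "vec.span (\<Union>{vec.span {x} | x. x \<in> loops}) \<subseteq> vec.span loops"
      using vec.span_mono[of "{_}" loops] by (intro vec.span_minimal) auto
    show "vec.span loops \<subseteq> vec.span (\<Union>{vec.span {x} | x. x \<in> loops})"
      by (rule vec.span_mono) (auto intro: vec.span_base)
  qed
  finally show ?thesis .
qed

lemma is_uniform_0_iff: "is_uniform 0 E \<rho> \<longleftrightarrow> \<rho> E = 0"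
  using E_subspaces_of rank_mono[OF _ E_subspaces_of] by (fastforce simp: is_uniform_def mem_subspaces_of)

lemma is_uniform_dim_iff: "is_uniform (vec.dim E) E \<rho> \<longleftrightarrow> (\<forall>V \<in> subspaces_of E. \<rho> V = vec.dim V)"
proof -
  have "min (vec.dim E) (vec.dim V) = vec.dim V" if "V \<in> subspaces_of E" for V
    using that vec.dim_subset[of V E] by (simp add: mem_subspaces_of min_def)
  then show ?thesis by (auto simp: is_uniform_def)
qed

end

locale q_matroid_unique_cyclic_flat = q_matroid +
  fixes Z
  assumes cyclic_flats_eq: "cyclic_flats E \<rho> = {Z}"
begin

lemma Z_eq_span_loops: "Z = vec.span loops"
  using span_loops_cyclic_flat cyclic_flats_eq by simp

lemma Z_subspaces_of: "Z \<in> subspaces_of E"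
  by (simp add: Z_eq_span_loops span_loops_subspaces_of)

lemma subspace_Z: "vec.subspace Z"
  using Z_subspaces_of by (simp add: mem_subspaces_of)

lemma rank_Z: "\<rho> Z = 0"
  by (simp add: Z_eq_span_loops rank_span_loops)

lemma cyclic_if_deficient_and_minimal:
  assumes U: "U \<in> subspaces_of E" "Z \<subseteq> U" and deficient: "\<rho> U + vec.dim Z < vec.dim U"
    and minimal: "\<And>U'. U' \<in> subspaces_of E \<Longrightarrow> Z \<subseteq> U' \<Longrightarrow> vec.dim U' < vec.dim U
                   \<Longrightarrow> vec.dim U' \<le> \<rho> U' + vec.dim Z"
  shows "is_cyclic E \<rho> U"
proof (rule is_cyclicI[OF U(1)])
  fix x W assume x: "x \<in> U" and sW: "vec.subspace W" and WU: "W \<subseteq> U"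
    and U_eq: "vec.span (insert x W) = U"
  let ?W' = "ssum W Z"
  have W: "W \<in> subspaces_of E" using sW WU U by (auto simp: mem_subspaces_of)
  have W': "?W' \<in> subspaces_of E" by (rule ssum_subspaces_of[OF subspace_E W Z_subspaces_of])
  have W'U: "?W' \<subseteq> U" using WU U by (intro ssum_subset) (auto simp: mem_subspaces_of)
  have rank_W': "\<rho> ?W' = \<rho> W" using rank_ssum_null[OF W Z_subspaces_of rank_Z] .
  show "\<rho> U \<le> \<rho> W"
  proof (cases "?W' = U")
    case False
    then have "vec.span ?W' \<subset> vec.span U"
      using W'U U by (auto simp: mem_subspaces_of subspace_ssum)
    then have "vec.dim ?W' < vec.dim U" by (rule vec.dim_psubset)
    moreover have "vec.dim U \<le> vec.dim ?W' + 1"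
    proof -
      have "U \<subseteq> vec.span (insert x ?W')"
        using U_eq vec.span_mono[of "insert x W" "insert x ?W'"] subset_ssum_left[of W Z] by auto
      then have "vec.dim U \<le> vec.dim (insert x ?W')"
        using vec.dim_subset vec.dim_span by metis
      then show ?thesis by (simp add: vec.dim_insert split: if_splits)
    qed
    moreover have "vec.dim ?W' \<le> \<rho> ?W' + vec.dim Z"
      using calculation(1) W' subset_ssum_right[of Z W] by (intro minimal) auto
    ultimately show ?thesis using deficient rank_W' by linarith
  qed (use rank_W' in simp)
qed

lemma rank_superset_Z:
  assumes "U \<in> subspaces_of E" "Z \<subseteq> U"
  shows "\<rho> U + vec.dim Z = vec.dim U"
proof -
  have "\<rho> U \<le> vec.dim U - vec.dim Z"
    using rank_le_rank_add_dim[OF Z_subspaces_of assms] rank_Z by simp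
  moreover have "vec.dim Z \<le> vec.dim U" using assms(2) by (rule vec.dim_subset)
  moreover have "vec.dim U \<le> \<rho> U + vec.dim Z"
    using assms
  proof (induction "vec.dim U" arbitrary: U rule: less_induct)
    case less
    show ?case
    proof (rule ccontr)
      assume deficient: "\<not> vec.dim U \<le> \<rho> U + vec.dim Z"
      then have "is_cyclic E \<rho> U"
        using less by (intro cyclic_if_deficient_and_minimal) auto
      then obtain F where "F \<in> cyclic_flats E \<rho>" "U \<subseteq> F" by (rule cyclic_subset_cyclic_flat)
      then have "U = Z" using cyclic_flats_eq less.prems(2) by auto
      then show False using deficient rank_Z by simp
    qed
  qed
  ultimately show ?thesis by linarith
qed

lemma rank_eq_dim_ssum_Z: "V \<in> subspaces_of E \<Longrightarrow> \<rho> V + vec.dim Z = vec.dim (ssum V Z)"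
  using rank_superset_Z[of "ssum V Z"] rank_ssum_null[OF _ Z_subspaces_of rank_Z]
  by (simp add: ssum_subspaces_of Z_subspaces_of subspace_E subset_ssum_right)

lemma flat_iff_superset_Z: "V \<in> subspaces_of E \<Longrightarrow> is_flat E \<rho> V \<longleftrightarrow> Z \<subseteq> V"
proof
  show "is_flat E \<rho> V \<Longrightarrow> Z \<subseteq> V" by (simp add: Z_eq_span_loops span_loops_subset_flat)
next
  assume V: "V \<in> subspaces_of E" and ZV: "Z \<subseteq> V"
  have "\<rho> V < \<rho> (ssum V (vec.span {x}))" if x: "x \<in> E" "x \<notin> V" for x
  proof -
    have sV: "vec.subspace V" using V by (simp add: mem_subspaces_of)
    have "ssum V (vec.span {x}) \<in> subspaces_of E"
      using V x subspace_E by (simp add: ssum_subspaces_of span_singleton_subspaces_of)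
    moreover have "Z \<subseteq> ssum V (vec.span {x})" using ZV subset_ssum_left[of V] by blast
    ultimately have "\<rho> (ssum V (vec.span {x})) + vec.dim Z = vec.dim V + 1"
      using rank_superset_Z dim_span_insert_notin[OF sV x(2)] by (simp add: ssum_span_singleton sV)
    then show ?thesis using rank_superset_Z[OF V ZV] by linarith
  qed
  then show "is_flat E \<rho> V" using V by (simp add: is_flat_def)
qed

lemma qcyc_eq_Int_Z:
  assumes V: "V \<in> subspaces_of E"
  shows "qcyc E \<rho> V = V \<inter> Z"
proof (intro antisym subsetI)
  fix x assume x: "x \<in> V \<inter> Z"
  have "\<rho> W = \<rho> V"
    if sW: "vec.subspace W" and WV: "W \<subseteq> V" and V_eq: "ssum W (vec.span {x}) = V" for W
  proof -
    have W: "W \<in> subspaces_of E" using sW WV V by (auto simp: mem_subspaces_of)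
    have xZ: "vec.span {x} \<subseteq> Z" using x subspace_Z by (simp add: vec.span_minimal)
    then have X: "vec.span {x} \<in> subspaces_of E"
      using Z_subspaces_of by (auto simp: mem_subspaces_of)
    then have "\<rho> (vec.span {x}) = 0" using rank_mono[OF X Z_subspaces_of xZ] rank_Z by simp
    then show ?thesis using rank_ssum_null[OF W X] V_eq by simp
  qed
  then show "x \<in> qcyc E \<rho> V" using x by (simp add: qcyc_def)
next
  fix x assume x: "x \<in> qcyc E \<rho> V"
  then have xV: "x \<in> V" by (simp add: qcyc_def)
  show "x \<in> V \<inter> Z"
  proof (rule ccontr)
    assume "x \<notin> V \<inter> Z"
    then obtain W where sW: "vec.subspace W" and WV: "W \<subseteq> V"
      and V_eq: "vec.span (insert x W) = V" and avoid: "x \<notin> ssum W Z"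
      using exists_hyperplane_avoiding[of V Z x] V subspace_Z xV by (auto simp: mem_subspaces_of)
    have W: "W \<in> subspaces_of E" using sW WV V by (auto simp: mem_subspaces_of)
    have "\<rho> W = \<rho> V" using x sW WV V_eq by (simp add: qcyc_def ssum_span_singleton)
    moreover have "vec.dim (ssum W Z) < vec.dim (ssum V Z)"
    proof (rule vec.dim_psubset)
      show "vec.span (ssum W Z) \<subset> vec.span (ssum V Z)"
        using ssum_mono[OF WV, of Z Z] avoid xV subset_ssum_left[of V Z]
        by (auto simp: subspace_ssum)
    qed
    ultimately show False using rank_eq_dim_ssum_Z[OF W] rank_eq_dim_ssum_Z[OF V] by simp
  qed
qed

lemma cyclic_iff_subset_Z: "V \<in> subspaces_of E \<Longrightarrow> is_cyclic E \<rho> V \<longleftrightarrow> V \<subseteq> Z"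
  by (auto simp: is_cyclic_def qcyc_eq_Int_Z)

lemma qcl_zero_eq_Z: "qcl E \<rho> {0} = Z"
  by (simp add: qcl_zero Z_eq_span_loops)

lemma Z_eq_E_iff: "Z = E \<longleftrightarrow> \<rho> E = 0"
proof
  assume "\<rho> E = 0"
  then have "vec.dim Z = vec.dim E"
    using rank_superset_Z[OF E_subspaces_of] Z_subspaces_of by (simp add: mem_subspaces_of)
  then show "Z = E"
    using Z_subspaces_of subspace_E by (intro vec.subspace_dim_equal) (auto simp: mem_subspaces_of)
qed (use rank_Z in blast)

lemma Z_eq_0_iff: "Z = {0} \<longleftrightarrow> (\<forall>V \<in> subspaces_of E. \<rho> V = vec.dim V)"
proof
  assume "Z = {0}"
  then show "\<forall>V \<in> subspaces_of E. \<rho> V = vec.dim V"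
    using rank_eq_dim_ssum_Z by (auto simp: ssum_absorb mem_subspaces_of vec.subspace_0)
next
  assume "\<forall>V \<in> subspaces_of E. \<rho> V = vec.dim V"
  then have "vec.dim Z = 0" using Z_subspaces_of rank_Z by simp
  then show "Z = {0}" using vec.subspace_0[OF subspace_Z] by auto
qed

end

theorem proposition4p8:
  fixes E :: "('a::{field,finite} ^ 'n) set" and \<rho> :: "('a ^ 'n) set \<Rightarrow> nat"
    and Z :: "('a ^ 'n) set"
  assumes "qmatroid E \<rho>"
    and "cyclic_flats E \<rho> = {Z}"
  shows "(\<forall>V \<in> subspaces_of E. is_flat E \<rho> V \<longleftrightarrow> Z \<subseteq> V)
       \<and> (\<forall>V \<in> subspaces_of E. is_cyclic E \<rho> V \<longleftrightarrow> V \<subseteq> Z)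
       \<and> (qcl E \<rho> {0} = E \<longleftrightarrow> is_uniform 0 E \<rho>)
       \<and> (qcyc E \<rho> E = {0} \<longleftrightarrow> is_uniform (vec.dim E) E \<rho>)"
proof -
  interpret q_matroid_unique_cyclic_flat E \<rho> Z
    using assms by unfold_locales
  have "qcyc E \<rho> E = Z"
    using qcyc_eq_Int_Z[OF E_subspaces_of] Z_subspaces_of by (auto simp: mem_subspaces_of)
  then show ?thesis
    by (simp add: flat_iff_superset_Z cyclic_iff_subset_Z qcl_zero_eq_Z Z_eq_E_iff Z_eq_0_iff
        is_uniform_0_iff is_uniform_dim_iff)
qed

end
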